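(* For all integers $m\ge1$, $r\ge0$ and $n\ge0$, $$\mathcal E_n(x)=\sum_{k=0}^n\sum_{l=k}^n\binom nl\,\mathcal E_{n-l}\,w_{m,r}(l,k)\,\mathcal D_{m,r}(k,x).$$
   Context: The Euler polynomials are defined by $\sum_{n\ge0}\mathcal E_n(x)\frac{t^n}{n!}=\frac{2e^{xt}}{e^t+1}$ and $\mathcal E_n:=\mathcal E_n(0)$. For integers $m\ge1$, $n,k,r\ge0$: the $r$-Whitney numbers of the first kind $w_{m,r}(n,k)$ are defined by $\sum_{n\ge k}w_{m,r}(n,k)\frac{z^n}{n!}=(1+mz)^{-r/m}\frac{\ln^k(1+mz)}{m^kk!}$; the $r$-Whitney numbers of the second kind $W_{m,r}(n,k)$ by $\sum_{n\ge k}W_{m,r}(n,k)\frac{z^n}{n!}=\frac{e^{rz}}{k!}\left(\frac{e^{mz}-1}{m}\right)^k$; and the $r$-Dowling polynomial is $\mathcal D_{m,r}(n,u):=\sum_{k=0}^nW_{m,r}(n,k)u^k$. *)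

theory Defs
  imports "HOL-Computational_Algebra.Formal_Power_Series"
begin

definition euler_poly :: "nat \<Rightarrow> real \<Rightarrow> real" where
  "euler_poly n x = fact n * fps_nth (fps_const 2 * fps_exp x / (fps_exp 1 + 1)) n"

definition euler_num :: "nat \<Rightarrow> real" where
  "euler_num n = euler_poly n 0"

text \<open>r-Whitney numbers of the first kind:
  EGF (1+mz)^(-r/m) ln^k(1+mz) / (m^k k!).\<close>
definition whitney1 :: "nat \<Rightarrow> nat \<Rightarrow> nat \<Rightarrow> nat \<Rightarrow> real" where
  "whitney1 m r n k = fact n *
     fps_nth ((fps_binomial (- real r / real m) oo (fps_const (real m) * fps_X)) *
       (fps_ln 1 oo (fps_const (real m) * fps_X)) ^ k /
       fps_const (real m ^ k * fact k)) n"

definition whitney2 :: "nat \<Rightarrow> nat \<Rightarrow> nat \<Rightarrow> nat \<Rightarrow> real" where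
  "whitney2 m r n k = fact n *
     fps_nth (fps_exp (real r) / fps_const (fact k) *
       ((fps_exp (real m) - 1) / fps_const (real m)) ^ k) n"

definition dowling :: "nat \<Rightarrow> nat \<Rightarrow> nat \<Rightarrow> real \<Rightarrow> real" where
  "dowling m r n u = (\<Sum>k=0..n. whitney2 m r n k * u ^ k)"

end

theory Submission
  imports Defs
begin

unbundle fps_syntax

text \<open>
  Write \<open>B\<close> for \<open>(1+mz)^(-r/m)\<close>, \<open>P\<close> for \<open>ln(1+mz)/m\<close> and \<open>Q\<close> for \<open>(e^(mz)-1)/m\<close>, so that
  \<open>P\<close> and \<open>Q\<close> are compositional inverses and \<open>B \<cdot> (e^(rz) \<circ> P) = 1\<close>.  The egf of the Dowling
  polynomials is \<open>H = e^(rz) \<cdot> (e^(xz) \<circ> Q)\<close>, and extracting coefficients from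
  \<open>B \<cdot> (H \<circ> P) = e^(xz)\<close> gives the inversion formula
  \<open>\<Sum>\<^sub>k w\<^sub>m\<^sub>,\<^sub>r(l,k) D\<^sub>m\<^sub>,\<^sub>r(k,x) = x^l\<close>.  The theorem then follows from the Appell property
  \<open>E\<^sub>n(x) = \<Sum>\<^sub>l (n choose l) E\<^sub>n\<^sub>-\<^sub>l x^l\<close> of the Euler polynomials.
\<close>

lemma sum_triangle_swap:
  fixes n :: nat
  shows "(\<Sum>k=0..n. \<Sum>l=k..n. f k l) = (\<Sum>l=0..n. \<Sum>k=0..l. f k l :: 'a::comm_monoid_add)"
proof -
  have "(\<Sum>k=0..n. \<Sum>l=k..n. f k l) = (\<Sum>k\<in>{0..n}. \<Sum>l\<in>{l\<in>{0..n}. k \<le> l}. f k l)"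
    by (intro sum.cong) auto
  also have "\<dots> = (\<Sum>l\<in>{0..n}. \<Sum>k\<in>{k\<in>{0..n}. k \<le> l}. f k l)"
    by (rule sum.swap_restrict) auto
  also have "\<dots> = (\<Sum>l=0..n. \<Sum>k=0..l. f k l)"
    by (intro sum.cong) auto
  finally show ?thesis .
qed

lemma fps_mult_compose_nth:
  fixes A C P :: "'a::comm_semiring_1 fps"
  assumes "P $ 0 = 0"
  shows "(A * (C oo P)) $ n = (\<Sum>k=0..n. C $ k * (A * P ^ k) $ n)"
proof -
  have power_nth_zero: "(P ^ k) $ j = 0" if "j < k" for j k
    using startsby_zero_power_prefix[OF assms] that by blast
  have "(A * (C oo P)) $ n = (\<Sum>j=0..n. \<Sum>k=0..n-j. A $ j * (C $ k * (P ^ k) $ (n-j)))"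
    by (simp add: fps_mult_nth fps_compose_nth sum_distrib_left)
  also have "\<dots> = (\<Sum>j=0..n. \<Sum>k=0..n. A $ j * (C $ k * (P ^ k) $ (n-j)))"
    by (intro sum.cong refl sum.mono_neutral_left) (auto simp: power_nth_zero)
  also have "\<dots> = (\<Sum>k=0..n. C $ k * (A * P ^ k) $ n)"
    by (subst sum.swap) (simp add: fps_mult_nth sum_distrib_left mult.left_commute)
  finally show ?thesis .
qed

lemma fps_exp_compose_ln: "fps_exp c oo fps_ln 1 = fps_binomial (c::'a::field_char_0)"
proof -
  let ?a = "fps_exp c oo fps_ln 1"
  have "fps_deriv ?a = (fps_const c * fps_exp c oo fps_ln 1) * (fps_const 1 * inverse (1 + fps_X))"
    by (simp add: fps_compose_deriv fps_ln_deriv)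
  also have "\<dots> = (fps_const c * ?a) / (1 + fps_X)"
    by (simp add: fps_divide_unit flip: fps_const_mult_apply_left)
  finally have "?a = fps_const (?a $ 0) * fps_binomial c"
    using fps_binomial_ODE_unique by blast
  then show ?thesis by simp
qed

lemma fps_exp_minus_one_compose_ln: "(fps_exp (1::'a::field_char_0) - 1) oo fps_ln 1 = fps_X"
  by (subst fps_ln_fps_exp_inv) (simp_all add: fps_inv_fps_exp_compose)

lemma fps_compose_const_mult:
  fixes a b :: "'a::idom fps"
  assumes "b $ 0 = 0"
  shows "a oo (fps_const c * b) = (a oo (fps_const c * fps_X)) oo b"
proof -
  have "fps_const c * b = (fps_const c * fps_X) oo b"
    using assms by (simp flip: fps_const_mult_apply_left)
  then show ?thesis
    using assms by (simp add: fps_compose_assoc)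
qed

definition whitney_weight :: "real \<Rightarrow> real \<Rightarrow> real fps" where
  "whitney_weight c r = fps_binomial (- r / c) oo (fps_const c * fps_X)"

definition whitney_log :: "real \<Rightarrow> real fps" where
  "whitney_log c = fps_const (1 / c) * (fps_ln 1 oo (fps_const c * fps_X))"

definition whitney_expm1 :: "real \<Rightarrow> real fps" where
  "whitney_expm1 c = fps_const (1 / c) * (fps_exp c - 1)"

lemma whitney_log_nth_0 [simp]: "whitney_log c $ 0 = 0"
  by (simp add: whitney_log_def)

lemma whitney_expm1_nth_0 [simp]: "whitney_expm1 c $ 0 = 0"
  by (simp add: whitney_expm1_def)

lemma fps_exp_compose_whitney_log:
  "fps_exp a oo whitney_log c = fps_binomial (a / c) oo (fps_const c * fps_X)"
proof -
  have "fps_exp a oo whitney_log c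
      = (fps_exp a oo (fps_const (1 / c) * fps_X)) oo (fps_ln 1 oo (fps_const c * fps_X))"
    unfolding whitney_log_def by (rule fps_compose_const_mult) simp
  also have "\<dots> = (fps_exp (a / c) oo fps_ln 1) oo (fps_const c * fps_X)"
    by (simp add: fps_compose_assoc)
  finally show ?thesis
    by (simp add: fps_exp_compose_ln)
qed

lemma whitney_weight_mult_exp_compose_log:
  "whitney_weight c r * (fps_exp r oo whitney_log c) = 1"
proof -
  have "whitney_weight c r * (fps_exp r oo whitney_log c)
      = (fps_binomial (- r / c) * fps_binomial (r / c)) oo (fps_const c * fps_X)"
    by (simp add: whitney_weight_def fps_exp_compose_whitney_log fps_compose_mult_distrib)
  also have "\<dots> = 1"
    by (simp flip: fps_binomial_add_mult)
  finally show ?thesis .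
qed

lemma whitney_expm1_compose_log:
  assumes "c \<noteq> 0"
  shows "whitney_expm1 c oo whitney_log c = fps_X"
proof -
  have "(fps_exp c - 1) oo whitney_log c
      = ((fps_exp c - 1) oo (fps_const (1 / c) * fps_X)) oo (fps_ln 1 oo (fps_const c * fps_X))"
    unfolding whitney_log_def by (rule fps_compose_const_mult) simp
  also have "\<dots> = ((fps_exp 1 - 1) oo fps_ln 1) oo (fps_const c * fps_X)"
    using assms by (simp add: fps_compose_sub_distrib fps_compose_assoc)
  finally have "(fps_exp c - 1) oo whitney_log c = fps_const c * fps_X"
    by (simp add: fps_exp_minus_one_compose_ln)
  then show ?thesis
    using assms by (simp add: whitney_expm1_def mult.assoc flip: fps_const_mult_apply_left)
qed

lemma whitney1_eq_coeff:
  assumes "m \<noteq> 0"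
  shows "whitney1 m r n k = fact n / fact k * (whitney_weight m r * whitney_log m ^ k) $ n"
proof -
  let ?L = "fps_ln 1 oo (fps_const m * fps_X)"
  have "whitney_weight m r * whitney_log m ^ k
      = fps_const (1 / real m ^ k) * (whitney_weight m r * ?L ^ k)"
    by (simp add: whitney_log_def power_mult_distrib power_one_over mult_ac)
  then have "(whitney_weight m r * whitney_log m ^ k) $ n = (whitney_weight m r * ?L ^ k) $ n / m ^ k"
    by (simp only: fps_mult_left_const_nth) simp
  moreover have "whitney1 m r n k = fact n * (whitney_weight m r * ?L ^ k) $ n / (m ^ k * fact k)"
    by (simp add: whitney1_def whitney_weight_def mult_ac divide_inverse)
  ultimately show ?thesis
    using assms by simp
qed

lemma whitney2_eq_coeff:
  "whitney2 m r n k = fact n / fact k * (fps_exp r * whitney_expm1 m ^ k) $ n"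
proof -
  have "fps_exp r / fps_const (fact k) * ((fps_exp m - 1) / fps_const m) ^ k
      = fps_const (1 / fact k) * (fps_exp r * whitney_expm1 m ^ k)"
    by (simp add: whitney_expm1_def mult_ac inverse_eq_divide)
  then show ?thesis
    unfolding whitney2_def by (simp only: fps_mult_left_const_nth) simp
qed

lemma dowling_egf:
  "dowling m r n x = fact n * (fps_exp r * (fps_exp x oo whitney_expm1 m)) $ n"
  by (simp add: dowling_def whitney2_eq_coeff fps_mult_compose_nth sum_distrib_left mult_ac)

lemma whitney_inversion:
  assumes "m \<noteq> 0"
  shows "(\<Sum>k=0..l. whitney1 m r l k * dowling m r k x) = x ^ l"
proof -
  define H where "H = fps_exp r * (fps_exp x oo whitney_expm1 m)"
  have "whitney_weight m r * (H oo whitney_log m)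
      = whitney_weight m r * (fps_exp r oo whitney_log m) * (fps_exp x oo fps_X)"
    using assms
    by (simp add: H_def fps_compose_mult_distrib fps_compose_assoc[symmetric]
        whitney_expm1_compose_log mult.assoc)
  then have egf_identity: "whitney_weight m r * (H oo whitney_log m) = fps_exp x"
    by (simp add: whitney_weight_mult_exp_compose_log)
  have "(\<Sum>k=0..l. whitney1 m r l k * dowling m r k x)
      = fact l * (\<Sum>k=0..l. H $ k * (whitney_weight m r * whitney_log m ^ k) $ l)"
    using assms by (simp add: whitney1_eq_coeff dowling_egf H_def sum_distrib_left mult_ac)
  also have "\<dots> = fact l * (whitney_weight m r * (H oo whitney_log m)) $ l"
    by (simp add: fps_mult_compose_nth)
  finally show ?thesis
    by (simp add: egf_identity)
qed

lemma euler_poly_binomial_expansion: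
  "euler_poly n x = (\<Sum>l=0..n. real (n choose l) * euler_num (n - l) * x ^ l)"
proof -
  define G :: "real fps" where "G = fps_const 2 * inverse (fps_exp 1 + 1)"
  have euler_poly_eq: "euler_poly j y = fact j * (fps_exp y * G) $ j" for j y
    by (simp add: euler_poly_def G_def fps_divide_unit mult_ac)
  have "(\<Sum>l=0..n. real (n choose l) * euler_num (n - l) * x ^ l)
      = (\<Sum>l=0..n. fact n * (x ^ l / fact l * G $ (n - l)))"
    by (intro sum.cong refl) (auto simp: euler_num_def euler_poly_eq binomial_fact field_simps)
  also have "\<dots> = euler_poly n x"
    by (simp add: euler_poly_eq fps_mult_nth sum_distrib_left)
  finally show ?thesis ..
qed

theorem mainTheorem15:
  fixes m r n :: nat and x :: real
  assumes "m \<ge> 1"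
  shows "euler_poly n x =
    (\<Sum>k=0..n. \<Sum>l=k..n. real (n choose l) * euler_num (n - l) * whitney1 m r l k * dowling m r k x)"
proof -
  have "(\<Sum>k=0..n. \<Sum>l=k..n. real (n choose l) * euler_num (n - l) * whitney1 m r l k * dowling m r k x)
      = (\<Sum>l=0..n. \<Sum>k=0..l. real (n choose l) * euler_num (n - l) * whitney1 m r l k * dowling m r k x)"
    by (rule sum_triangle_swap)
  also have "\<dots> = (\<Sum>l=0..n. real (n choose l) * euler_num (n - l) * x ^ l)"
    using assms by (simp add: whitney_inversion mult.assoc flip: sum_distrib_left)
  also have "\<dots> = euler_poly n x"
    by (rule euler_poly_binomial_expansion[symmetric])
  finally show ?thesis ..
qed

end
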